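(* Let $n\ge3$ and let $g=(g_{ab})$ be a smooth Riemannian metric (symmetric positive definite matrix function) on an open set $U\subset\mathbb R^n$. Let $L=g^{ab}\partial_{ab}$ and define the linear operator $\tilde\Gamma^k$ on symmetric matrix functions $h$ by $\tilde\Gamma^k(h)=-\frac{n-2}{2}\frac{g^{kr}g^{ka}g^{kb}}{g^{kk}}\partial_rh_{ab}$ (no summation over $k$). Let $Q$ be the principal part (fourth order part) of the linear operator $$h_{ab}\mapsto L^2(h_{ab})-L\big[\partial_a(g_{bl}\tilde\Gamma^l(h))+\partial_b(g_{al}\tilde\Gamma^l(h))\big]+\frac{n-2}{n-1}\partial_{abl}\tilde\Gamma^l(h)+\frac1{n-1}L(\partial_l\tilde\Gamma^l(h))\,g_{ab}$$ acting on symmetric $n\times n$ matrix functions $h$, where $L^2=g^{ab}g^{cd}\partial_{abcd}$. Then $Q$ is elliptic of order $4$, i.e. for every $x\in U$ and $\xi\ne0$ its principal symbol is an invertible linear map on symmetric matrices. *)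

theory Defs
  imports "HOL-Analysis.Analysis"
begin

definition pdiff :: "'n::finite \<Rightarrow> (real^'n \<Rightarrow> real) \<Rightarrow> real^'n \<Rightarrow> real" where
  "pdiff i f x = deriv (\<lambda>t. f (x + t *\<^sub>R axis i 1)) 0"

fun iter_pdiff :: "'n::finite list \<Rightarrow> (real^'n \<Rightarrow> real) \<Rightarrow> real^'n \<Rightarrow> real" where
  "iter_pdiff [] f = f"
| "iter_pdiff (i # is) f = pdiff i (iter_pdiff is f)"

definition smooth_on_set :: "(real^'n::finite) set \<Rightarrow> (real^'n \<Rightarrow> real) \<Rightarrow> bool" where
  "smooth_on_set U f \<longleftrightarrow>
     (\<forall>is. continuous_on U (iter_pdiff is f) \<and>
        (\<forall>i. \<forall>x\<in>U. (\<lambda>t. iter_pdiff is f (x + t *\<^sub>R axis i 1)) differentiable (at 0)))"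

definition riemannian_metric_on :: "(real^'n::finite) set \<Rightarrow> (real^'n \<Rightarrow> real^'n^'n) \<Rightarrow> bool" where
  "riemannian_metric_on U g \<longleftrightarrow>
     (\<forall>a b. smooth_on_set U (\<lambda>x. g x $ a $ b)) \<and>
     (\<forall>x\<in>U. transpose (g x) = g x \<and> (\<forall>v. v \<noteq> 0 \<longrightarrow> v \<bullet> (g x *v v) > 0))"

definition sym_mats :: "(real^'n::finite^'n) set" where
  "sym_mats = {H. transpose H = H}"

section \<open>Principal symbols (each derivative \<partial>_a replaced by \<xi>_a), at a point where g = G\<close>

definition symb_L :: "real^'n::finite^'n \<Rightarrow> real^'n \<Rightarrow> real" where
  "symb_L G \<xi> = (\<Sum>a\<in>UNIV. \<Sum>b\<in>UNIV. matrix_inv G $ a $ b * \<xi> $ a * \<xi> $ b)"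

definition symb_Gt :: "real^'n::finite^'n \<Rightarrow> real^'n \<Rightarrow> real^'n^'n \<Rightarrow> 'n \<Rightarrow> real" where
  "symb_Gt G \<xi> H k =
     - ((real CARD('n) - 2) / 2) *
       (\<Sum>r\<in>UNIV. \<Sum>a\<in>UNIV. \<Sum>b\<in>UNIV.
          matrix_inv G $ k $ r * matrix_inv G $ k $ a * matrix_inv G $ k $ b
            / matrix_inv G $ k $ k * \<xi> $ r * H $ a $ b)"

definition principal_symbol :: "real^'n::finite^'n \<Rightarrow> real^'n \<Rightarrow> real^'n^'n \<Rightarrow> real^'n^'n" where
  "principal_symbol G \<xi> H = (\<chi> a b.
       (symb_L G \<xi>)\<^sup>2 * H $ a $ b
     - symb_L G \<xi> * (\<xi> $ a * (\<Sum>l\<in>UNIV. G $ b $ l * symb_Gt G \<xi> H l)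
                     + \<xi> $ b * (\<Sum>l\<in>UNIV. G $ a $ l * symb_Gt G \<xi> H l))
     + (real CARD('n) - 2) / (real CARD('n) - 1) *
         \<xi> $ a * \<xi> $ b * (\<Sum>l\<in>UNIV. \<xi> $ l * symb_Gt G \<xi> H l)
     + 1 / (real CARD('n) - 1) *
         symb_L G \<xi> * (\<Sum>l\<in>UNIV. \<xi> $ l * symb_Gt G \<xi> H l) * G $ a $ b)"

end

theory Submission
  imports Defs
begin

text \<open>The symbol is linear and commutes with transposition, so it suffices to show that its
  kernel is trivial. If \<open>P(h) = 0\<close>, contracting the equation with \<open>g\<^sup>k\<^sup>a g\<^sup>k\<^sup>b\<close> and
  combining it with the definition of \<open>\<tilde>\<Gamma>\<^sup>k\<close> gives two scalar relations at each index \<open>k\<close>,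
  whose only solution is \<open>\<tilde>\<Gamma>\<^sup>k = (n-2)/(2(n-1)|\<xi>|\<^sup>2) S \<xi>\<^sup>k\<close> with \<open>S = \<xi>\<^sub>l \<tilde>\<Gamma>\<^sup>l\<close>.
  Contracting with \<open>\<xi>\<close> yields \<open>S = (n-2)/(2(n-1)) S\<close>, hence \<open>S = 0\<close>, \<open>\<tilde>\<Gamma> = 0\<close>, and the
  equation collapses to \<open>|\<xi>|\<^sup>4 h = 0\<close>.\<close>

definition pos_def :: "real^'n::finite^'n \<Rightarrow> bool" where
  "pos_def A \<longleftrightarrow> (\<forall>v. v \<noteq> 0 \<longrightarrow> v \<bullet> (A *v v) > 0)"

lemma invertible_if_pos_def:
  fixes A :: "real^'n::finite^'n"
  assumes "pos_def A"
  shows "invertible A"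
proof -
  have "\<forall>x. A *v x = 0 \<longrightarrow> x = 0"
    using assms unfolding pos_def_def by (metis inner_zero_right order_less_irrefl)
  then show ?thesis
    by (meson invertible_left_inverse matrix_left_invertible_ker)
qed

lemma matrix_inv_left:
  fixes A :: "'a::field^'n::finite^'n"
  assumes "invertible A"
  shows "matrix_inv A ** A = mat 1"
  using assms unfolding invertible_def matrix_inv_def by (rule someI2_ex) blast

lemma matrix_inv_right:
  fixes A :: "'a::field^'n::finite^'n"
  assumes "invertible A"
  shows "A ** matrix_inv A = mat 1"
  using assms unfolding invertible_def matrix_inv_def by (rule someI2_ex) blast

lemma pos_def_matrix_inv:
  fixes A :: "real^'n::finite^'n"
  assumes "pos_def A"
  shows "pos_def (matrix_inv A)"
  unfolding pos_def_def
proof (intro allI impI)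
  fix v :: "real^'n" assume "v \<noteq> 0"
  define w where "w = matrix_inv A *v v"
  have v: "v = A *v w"
    using invertible_if_pos_def[OF assms]
    by (simp add: w_def matrix_vector_mul_assoc matrix_inv_right)
  with \<open>v \<noteq> 0\<close> have "w \<bullet> (A *v w) > 0"
    using assms unfolding pos_def_def by (metis matrix_vector_mult_0_right)
  moreover have "v \<bullet> (matrix_inv A *v v) = w \<bullet> (A *v w)"
    unfolding w_def[symmetric] by (subst (1) v) (rule inner_commute)
  ultimately show "v \<bullet> (matrix_inv A *v v) > 0" by simp
qed

lemma pos_def_diag_pos:
  fixes A :: "real^'n::finite^'n"
  assumes "pos_def A"
  shows "A $ k $ k > 0"
proof -
  have "axis k 1 \<bullet> (A *v axis k 1) > 0"
    using assms unfolding pos_def_def by (simp add: axis_eq_0_iff)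
  moreover have "(A *v axis k 1) $ k = A $ k $ k"
    by (simp add: matrix_vector_mult_basis column_def)
  ultimately show ?thesis by (simp add: inner_axis')
qed

lemma symb_Gt_eq:
  fixes G :: "real^'n::finite^'n"
  defines "Gi \<equiv> matrix_inv G"
  shows "symb_Gt G \<xi> H k = - ((real CARD('n) - 2) / 2) * (Gi *v \<xi>) $ k *
     (\<Sum>a\<in>UNIV. \<Sum>b\<in>UNIV. Gi $ k $ a * Gi $ k $ b * H $ a $ b) / Gi $ k $ k"
proof -
  define X where "X = (\<Sum>a\<in>UNIV. \<Sum>b\<in>UNIV. Gi $ k $ a * Gi $ k $ b * H $ a $ b)"
  have "(\<Sum>r\<in>UNIV. Gi $ k $ r * \<xi> $ r) * X / Gi $ k $ k
      = (\<Sum>r\<in>UNIV. Gi $ k $ r * \<xi> $ r * X / Gi $ k $ k)"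
    by (simp add: sum_distrib_right sum_divide_distrib)
  also have "\<dots> = (\<Sum>r\<in>UNIV. \<Sum>a\<in>UNIV. \<Sum>b\<in>UNIV.
      Gi $ k $ r * Gi $ k $ a * Gi $ k $ b / Gi $ k $ k * \<xi> $ r * H $ a $ b)"
    unfolding X_def by (intro sum.cong refl) (simp add: sum_distrib_left sum_divide_distrib mult_ac)
  finally show ?thesis
    unfolding X_def symb_Gt_def Gi_def[symmetric] matrix_vector_mult_def
    by (metis (no_types, lifting) vec_lambda_beta mult.assoc times_divide_eq_right)
qed

lemma symb_Gt_add:
  fixes G :: "real^'n::finite^'n"
  shows "symb_Gt G \<xi> (H + K) k = symb_Gt G \<xi> H k + symb_Gt G \<xi> K k"
  unfolding symb_Gt_def by (simp add: sum.distrib distrib_left distrib_right add_divide_distrib)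

lemma symb_Gt_scaleR:
  fixes G :: "real^'n::finite^'n"
  shows "symb_Gt G \<xi> (c *\<^sub>R H) k = c * symb_Gt G \<xi> H k"
  unfolding symb_Gt_def by (simp add: sum_distrib_left mult_ac)

lemma symb_Gt_transpose:
  fixes G :: "real^'n::finite^'n"
  shows "symb_Gt G \<xi> (transpose H) k = symb_Gt G \<xi> H k"
  unfolding symb_Gt_eq transpose_def
  by (simp add: mult_ac, subst sum.swap, simp add: mult_ac)

lemma linear_principal_symbol:
  fixes G :: "real^'n::finite^'n"
  shows "linear (principal_symbol G \<xi>)"
proof (rule linearI)
  fix H K :: "real^'n^'n" and c :: real
  have "(\<Sum>l\<in>UNIV. v $ l * symb_Gt G \<xi> (H + K) l)
      = (\<Sum>l\<in>UNIV. v $ l * symb_Gt G \<xi> H l) + (\<Sum>l\<in>UNIV. v $ l * symb_Gt G \<xi> K l)" for v :: "real^'n"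
    by (simp add: symb_Gt_add distrib_left sum.distrib)
  then show "principal_symbol G \<xi> (H + K) = principal_symbol G \<xi> H + principal_symbol G \<xi> K"
    by (simp add: principal_symbol_def vec_eq_iff algebra_simps add_divide_distrib diff_divide_distrib)
  have "(\<Sum>l\<in>UNIV. v $ l * symb_Gt G \<xi> (c *\<^sub>R H) l) = c * (\<Sum>l\<in>UNIV. v $ l * symb_Gt G \<xi> H l)"
    for v :: "real^'n"
    by (simp add: symb_Gt_scaleR sum_distrib_left mult_ac)
  then show "principal_symbol G \<xi> (c *\<^sub>R H) = c *\<^sub>R principal_symbol G \<xi> H"
    by (simp add: principal_symbol_def vec_eq_iff algebra_simps)
qed

lemma principal_symbol_transpose:
  fixes G :: "real^'n::finite^'n"
  assumes "transpose G = G"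
  shows "principal_symbol G \<xi> (transpose H) = transpose (principal_symbol G \<xi> H)"
proof -
  have "G $ a $ b = G $ b $ a" for a b
    using assms by (metis transpose_def vec_lambda_beta)
  then show ?thesis
    unfolding principal_symbol_def symb_Gt_transpose
    by (simp add: vec_eq_iff transpose_def algebra_simps)
qed

lemma symb_L_eq_inner:
  fixes G :: "real^'n::finite^'n"
  shows "symb_L G \<xi> = \<xi> \<bullet> (matrix_inv G *v \<xi>)"
  by (simp add: symb_L_def inner_vec_def matrix_vector_mult_def sum_distrib_left mult_ac)

lemma contract_with_row_of_inverse:
  fixes G Gi H :: "real^'n::finite^'n" and \<xi> V :: "real^'n"
  assumes inv: "Gi ** G = mat 1"
    and eq: "\<And>a b. L\<^sup>2 * H $ a $ b =
      L * (\<xi> $ a * V $ b + \<xi> $ b * V $ a) - c * \<xi> $ a * \<xi> $ b * S - d * L * S * G $ a $ b"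
  shows "L\<^sup>2 * (\<Sum>a\<in>UNIV. \<Sum>b\<in>UNIV. Gi $ k $ a * Gi $ k $ b * H $ a $ b)
    = 2 * L * (Gi *v \<xi>) $ k * (Gi *v V) $ k - c * ((Gi *v \<xi>) $ k)\<^sup>2 * S - d * L * S * Gi $ k $ k"
proof -
  have outer: "(\<Sum>a\<in>UNIV. \<Sum>b\<in>UNIV. Gi $ k $ a * Gi $ k $ b * (x $ a * y $ b)) = (Gi *v x) $ k * (Gi *v y) $ k"
    for x y :: "real^'n"
    by (simp add: matrix_vector_mult_def sum_product mult_ac)
  have "(\<Sum>a\<in>UNIV. \<Sum>b\<in>UNIV. Gi $ k $ a * Gi $ k $ b * G $ a $ b)
      = (\<Sum>b\<in>UNIV. (\<Sum>a\<in>UNIV. Gi $ k $ a * G $ a $ b) * Gi $ k $ b)"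
    unfolding sum_distrib_left sum_distrib_right by (subst sum.swap) (simp add: mult_ac)
  also have "\<dots> = (\<Sum>b\<in>UNIV. (Gi ** G) $ k $ b * Gi $ k $ b)"
    by (simp add: matrix_matrix_mult_def)
  also have "\<dots> = Gi $ k $ k"
    by (simp add: inv mat_def flip: of_bool_def)
  finally have metric: "(\<Sum>a\<in>UNIV. \<Sum>b\<in>UNIV. Gi $ k $ a * Gi $ k $ b * G $ a $ b) = Gi $ k $ k" .
  have "L\<^sup>2 * (\<Sum>a\<in>UNIV. \<Sum>b\<in>UNIV. Gi $ k $ a * Gi $ k $ b * H $ a $ b)
      = (\<Sum>a\<in>UNIV. \<Sum>b\<in>UNIV. Gi $ k $ a * Gi $ k $ b * (L\<^sup>2 * H $ a $ b))"
    by (simp add: sum_distrib_left mult_ac)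
  also have "\<dots> = (\<Sum>a\<in>UNIV. \<Sum>b\<in>UNIV.
        L * (Gi $ k $ a * Gi $ k $ b * (\<xi> $ a * V $ b))
      + L * (Gi $ k $ a * Gi $ k $ b * (V $ a * \<xi> $ b))
      - c * S * (Gi $ k $ a * Gi $ k $ b * (\<xi> $ a * \<xi> $ b))
      - d * L * S * (Gi $ k $ a * Gi $ k $ b * G $ a $ b))"
    unfolding eq by (intro sum.cong refl) (simp add: algebra_simps)
  also have "\<dots> = L * (\<Sum>a\<in>UNIV. \<Sum>b\<in>UNIV. Gi $ k $ a * Gi $ k $ b * (\<xi> $ a * V $ b))
      + L * (\<Sum>a\<in>UNIV. \<Sum>b\<in>UNIV. Gi $ k $ a * Gi $ k $ b * (V $ a * \<xi> $ b))
      - c * S * (\<Sum>a\<in>UNIV. \<Sum>b\<in>UNIV. Gi $ k $ a * Gi $ k $ b * (\<xi> $ a * \<xi> $ b))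
      - d * L * S * (\<Sum>a\<in>UNIV. \<Sum>b\<in>UNIV. Gi $ k $ a * Gi $ k $ b * G $ a $ b)"
    by (simp add: sum.distrib sum_subtractf sum_distrib_left)
  finally have "L\<^sup>2 * (\<Sum>a\<in>UNIV. \<Sum>b\<in>UNIV. Gi $ k $ a * Gi $ k $ b * H $ a $ b)
      = L * ((Gi *v \<xi>) $ k * (Gi *v V) $ k) + L * ((Gi *v V) $ k * (Gi *v \<xi>) $ k)
      - c * S * ((Gi *v \<xi>) $ k * (Gi *v \<xi>) $ k) - d * L * S * Gi $ k $ k"
    unfolding outer metric .
  then show ?thesis by (simp add: power2_eq_square algebra_simps)
qed

text \<open>The two relations of the kernel argument at index \<open>k\<close>, with \<open>t = \<tilde>\<Gamma>\<^sup>k(h)\<close>,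
  \<open>w = g\<^sup>k\<^sup>a g\<^sup>k\<^sup>b h\<^sub>a\<^sub>b\<close>, \<open>\<eta> = g\<^sup>k\<^sup>r \<xi>\<^sub>r\<close>, \<open>g = g\<^sup>k\<^sup>k\<close> and \<open>L = |\<xi>|\<^sup>2\<close>.\<close>
lemma contracted_equations_solution:
  fixes L g m \<eta> w t S :: real
  assumes "L > 0" and "g > 0" and "m \<ge> 2"
    and Gt: "g * t = - ((m - 2) / 2) * \<eta> * w"
    and contracted: "L\<^sup>2 * w = 2 * L * \<eta> * t - (m - 2) / (m - 1) * \<eta>\<^sup>2 * S - 1 / (m - 1) * L * S * g"
  shows "t = (m - 2) / (2 * (m - 1) * L) * S * \<eta>"
proof -
  define c where "c = m - 2"
  define F where "F = L\<^sup>2 * g + c * L * \<eta>\<^sup>2"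
  have "c \<ge> 0" and m1: "m - 1 = c + 1"
    using assms(3) by (simp_all add: c_def)
  have "F > 0"
    unfolding F_def using assms(1,2) \<open>c \<ge> 0\<close> by (intro add_pos_nonneg) auto
  have "2 * g * t = - c * \<eta> * w"
    using Gt unfolding c_def[symmetric] by (simp add: field_simps)
  moreover have "(c + 1) * L\<^sup>2 * w = 2 * (c + 1) * L * \<eta> * t - c * \<eta>\<^sup>2 * S - L * S * g"
  proof -
    have "c + 1 \<noteq> 0" using \<open>c \<ge> 0\<close> by simp
    have "L\<^sup>2 * w = 2 * L * \<eta> * t - (c * \<eta>\<^sup>2 * S + L * S * g) / (c + 1)"
      using contracted unfolding c_def[symmetric] m1 by (simp add: add_divide_distrib)
    then have "(c + 1) * L\<^sup>2 * w = (c + 1) * (2 * L * \<eta> * t - (c * \<eta>\<^sup>2 * S + L * S * g) / (c + 1))"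
      by (simp only: mult.assoc)
    with \<open>c + 1 \<noteq> 0\<close> show ?thesis by (simp add: right_diff_distrib mult.assoc)
  qed
  ultimately have "(t * (2 * (c + 1) * L)) * F = (c * S * \<eta>) * F"
    unfolding F_def by algebra
  then have "t * (2 * (c + 1) * L) = c * S * \<eta>"
    using \<open>F > 0\<close> by simp
  moreover have "2 * (c + 1) * L \<noteq> 0"
    using \<open>c \<ge> 0\<close> assms(1) by simp
  ultimately show ?thesis
    unfolding m1 c_def[symmetric] by (simp add: eq_divide_eq)
qed

lemma principal_symbol_eq_0_imp:
  fixes G H :: "real^'n::finite^'n"
  assumes "CARD('n) \<ge> 2" and "pos_def G" and "\<xi> \<noteq> 0" and "principal_symbol G \<xi> H = 0"
  shows "H = 0"
proof -
  define m where "m = real CARD('n)"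
  define Gi where "Gi = matrix_inv G"
  define L where "L = symb_L G \<xi>"
  define t where "t = (\<chi> l. symb_Gt G \<xi> H l)"
  define S where "S = \<xi> \<bullet> t"
  define V where "V = G *v t"
  have "m \<ge> 2" using assms(1) by (simp add: m_def)
  have inv: "Gi ** G = mat 1"
    unfolding Gi_def by (rule matrix_inv_left[OF invertible_if_pos_def[OF assms(2)]])
  have "pos_def Gi"
    unfolding Gi_def by (rule pos_def_matrix_inv[OF assms(2)])
  then have diag: "Gi $ k $ k > 0" for k
    by (rule pos_def_diag_pos)
  have "L > 0"
    using \<open>pos_def Gi\<close> assms(3) unfolding L_def symb_L_eq_inner Gi_def[symmetric] pos_def_def by blast
  have kernel_eq: "L\<^sup>2 * H $ a $ b = L * (\<xi> $ a * V $ b + \<xi> $ b * V $ a)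
      - (m - 2) / (m - 1) * \<xi> $ a * \<xi> $ b * S - 1 / (m - 1) * L * S * G $ a $ b" for a b
  proof -
    have V: "(\<Sum>l\<in>UNIV. G $ c $ l * symb_Gt G \<xi> H l) = V $ c" for c
      by (simp add: V_def t_def matrix_vector_mult_def)
    have S: "(\<Sum>l\<in>UNIV. \<xi> $ l * symb_Gt G \<xi> H l) = S"
      by (simp add: S_def t_def inner_vec_def)
    have "principal_symbol G \<xi> H $ a $ b = 0" using assms(4) by simp
    then show ?thesis
      unfolding principal_symbol_def L_def[symmetric] m_def[symmetric] V S by simp
  qed
  have "Gi *v V = t"
    by (simp add: V_def matrix_vector_mul_assoc inv)
  have t_eq: "t $ k = (m - 2) / (2 * (m - 1) * L) * S * (Gi *v \<xi>) $ k" for k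
  proof (rule contracted_equations_solution[OF \<open>L > 0\<close> diag \<open>m \<ge> 2\<close>])
    show "Gi $ k $ k * t $ k = - ((m - 2) / 2) * (Gi *v \<xi>) $ k *
        (\<Sum>a\<in>UNIV. \<Sum>b\<in>UNIV. Gi $ k $ a * Gi $ k $ b * H $ a $ b)"
      using diag[of k] unfolding t_def m_def Gi_def symb_Gt_eq by simp
    show "L\<^sup>2 * (\<Sum>a\<in>UNIV. \<Sum>b\<in>UNIV. Gi $ k $ a * Gi $ k $ b * H $ a $ b)
        = 2 * L * (Gi *v \<xi>) $ k * t $ k - (m - 2) / (m - 1) * ((Gi *v \<xi>) $ k)\<^sup>2 * S
          - 1 / (m - 1) * L * S * Gi $ k $ k"
      using contract_with_row_of_inverse[OF inv kernel_eq] by (simp add: \<open>Gi *v V = t\<close>)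
  qed
  have "S = (\<Sum>k\<in>UNIV. \<xi> $ k * t $ k)"
    by (simp add: S_def inner_vec_def)
  also have "\<dots> = (\<Sum>k\<in>UNIV. (m - 2) / (2 * (m - 1) * L) * S * (\<xi> $ k * (Gi *v \<xi>) $ k))"
    by (simp add: t_eq mult_ac)
  also have "\<dots> = (m - 2) / (2 * (m - 1) * L) * S * L"
    unfolding L_def symb_L_eq_inner Gi_def inner_vec_def by (simp add: sum_distrib_left)
  finally have "S = (m - 2) / (2 * (m - 1)) * S"
    using \<open>L > 0\<close> by simp
  then have "S = 0"
    using \<open>m \<ge> 2\<close> by (simp add: field_simps)
  then have "t = 0"
    using t_eq by (simp add: vec_eq_iff)
  then have "V = 0"
    by (simp add: V_def)
  then have "L\<^sup>2 * H $ a $ b = 0" for a b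
    using kernel_eq \<open>S = 0\<close> by simp
  then show "H = 0"
    using \<open>L > 0\<close> by (simp add: vec_eq_iff)
qed

lemma bij_betw_sym_mats:
  fixes f :: "real^'n::finite^'n \<Rightarrow> real^'n^'n"
  assumes "linear f" and "inj f" and transpose: "\<And>H. f (transpose H) = transpose (f H)"
  shows "bij_betw f sym_mats sym_mats"
proof -
  have "surj f"
    using assms(1,2) by (rule linear_inj_imp_surj)
  have "K \<in> f ` sym_mats" if "K \<in> sym_mats" for K
  proof -
    obtain H where H: "f H = K" using \<open>surj f\<close> by (metis surjD)
    then have "f (transpose H) = f H"
      using that transpose by (simp add: sym_mats_def)
    then have "H \<in> sym_mats"
      using \<open>inj f\<close> by (simp add: sym_mats_def inj_eq)
    with H show ?thesis by blast
  qed
  moreover have "f ` sym_mats \<subseteq> sym_mats"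
    using transpose by (auto simp: sym_mats_def simp flip: transpose)
  ultimately show ?thesis
    using \<open>inj f\<close> unfolding bij_betw_def by (auto simp: inj_on_def inj_def)
qed

theorem lemma2p3:
  fixes U :: "(real^'n::finite) set" and g :: "real^'n \<Rightarrow> real^'n^'n"
  assumes "CARD('n) \<ge> 3"
    and "open U"
    and "riemannian_metric_on U g"
  shows "\<forall>x\<in>U. \<forall>\<xi>::real^'n. \<xi> \<noteq> 0 \<longrightarrow>
           bij_betw (principal_symbol (g x) \<xi>) sym_mats sym_mats"
proof (intro ballI allI impI)
  fix x and \<xi> :: "real^'n"
  assume "x \<in> U" and "\<xi> \<noteq> 0"
  then have sym: "transpose (g x) = g x" and "pos_def (g x)"
    using assms(3) unfolding riemannian_metric_on_def pos_def_def by auto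
  have "inj (principal_symbol (g x) \<xi>)"
    unfolding linear_injective_0[OF linear_principal_symbol]
    using principal_symbol_eq_0_imp[OF _ \<open>pos_def (g x)\<close> \<open>\<xi> \<noteq> 0\<close>] assms(1) by auto
  then show "bij_betw (principal_symbol (g x) \<xi>) sym_mats sym_mats"
    by (rule bij_betw_sym_mats[OF linear_principal_symbol _ principal_symbol_transpose[OF sym]])
qed

end
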